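(* Let $|\psi\rangle\in H_A\otimes H_B$ be a unit vector in a finite-dimensional bipartite Hilbert space, $\rho=|\psi\rangle\langle\psi|$, and $\rho_A=\mathrm{Tr}_B\rho$, $\rho_B=\mathrm{Tr}_A\rho$. For density operators $\rho,\sigma$ define $D_2(\rho,\sigma)=\sqrt{2-2\,\mathrm{Tr}(\rho^{1/2}\sigma^{1/2})}$. Then $$D_2(\rho,\rho_A\otimes\rho_B)=C(\rho),\qquad\text{where } C(\rho)=\sqrt{2-2\,\mathrm{Tr}(\rho_A^2)}.$$
   Context: $\rho^{1/2}$ denotes the positive square root of a positive semidefinite operator. $C(\rho)$ is the concurrence of the pure state $\rho$. *)

theory Defs
  imports Complex_Main "Jordan_Normal_Form.Matrix"
begin

text \<open>Finite-dimensional bipartite system H_A (x) H_B with dim H_A = dA, dim H_B = dB.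
  Basis vector e_i (x) f_j of the product space is indexed by i * dB + j.\<close>

definition mtrace :: "complex mat \<Rightarrow> complex" where
  "mtrace A = (\<Sum>i<dim_row A. A $$ (i, i))"

definition adj :: "complex mat \<Rightarrow> complex mat" where
  "adj A = mat (dim_col A) (dim_row A) (\<lambda>(i, j). cnj (A $$ (j, i)))"

definition psd :: "complex mat \<Rightarrow> bool" where
  "psd A \<longleftrightarrow> dim_row A = dim_col A \<and> adj A = A \<and>
     (\<forall>v. dim_vec v = dim_row A \<longrightarrow>
        0 \<le> Re (\<Sum>i<dim_row A. cnj (v $ i) * (A *\<^sub>v v) $ i))"

definition msqrt :: "complex mat \<Rightarrow> complex mat" where
  "msqrt A = (THE B. psd B \<and> dim_row B = dim_row A \<and> B * B = A)"

definition proj :: "complex vec \<Rightarrow> complex mat" where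
  "proj v = mat (dim_vec v) (dim_vec v) (\<lambda>(i, j). v $ i * cnj (v $ j))"

definition ptrace_B :: "nat \<Rightarrow> nat \<Rightarrow> complex mat \<Rightarrow> complex mat" where
  "ptrace_B dA dB R = mat dA dA (\<lambda>(i, i'). \<Sum>j<dB. R $$ (i * dB + j, i' * dB + j))"

definition ptrace_A :: "nat \<Rightarrow> nat \<Rightarrow> complex mat \<Rightarrow> complex mat" where
  "ptrace_A dA dB R = mat dB dB (\<lambda>(j, j'). \<Sum>i<dA. R $$ (i * dB + j, i * dB + j'))"

definition tensor :: "complex mat \<Rightarrow> complex mat \<Rightarrow> complex mat" where
  "tensor X Y = mat (dim_row X * dim_row Y) (dim_col X * dim_col Y)
     (\<lambda>(r, c). X $$ (r div dim_row Y, c div dim_col Y) * Y $$ (r mod dim_row Y, c mod dim_col Y))"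

definition D2 :: "complex mat \<Rightarrow> complex mat \<Rightarrow> real" where
  "D2 \<rho> \<sigma> = sqrt (2 - 2 * Re (mtrace (msqrt \<rho> * msqrt \<sigma>)))"

definition concurrence :: "nat \<Rightarrow> nat \<Rightarrow> complex mat \<Rightarrow> real" where
  "concurrence dA dB \<rho> = sqrt (2 - 2 * Re (mtrace (ptrace_B dA dB \<rho> * ptrace_B dA dB \<rho>)))"

end

theory Submission
  imports Defs "Jordan_Normal_Form.Schur_Decomposition"
begin

text \<open>For a unit vector \<open>\<psi>\<close> the projector \<open>\<rho> = |\<psi>\<rangle>\<langle>\<psi>|\<close> is its own square root, and
  \<open>msqrt (\<rho>\<^sub>A \<otimes> \<rho>\<^sub>B) = E F\<close> for the commuting psd factors \<open>E = msqrt \<rho>\<^sub>A \<otimes> 1\<close> and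
  \<open>F = 1 \<otimes> msqrt \<rho>\<^sub>B\<close>, so the trace in \<open>D\<^sub>2\<close> is \<open>\<langle>\<psi>| E F |\<psi>\<rangle>\<close>. The two partial traces act
  alike on \<open>\<psi>\<close>, i.e. \<open>E\<^sup>2 \<psi> = (\<rho>\<^sub>A \<otimes> 1) \<psi> = (1 \<otimes> \<rho>\<^sub>B) \<psi> = F\<^sup>2 \<psi>\<close>, and for commuting psd
  \<open>E\<close>, \<open>F\<close> this forces \<open>E F \<psi> = E\<^sup>2 \<psi>\<close>. Hence the trace is \<open>\<langle>\<psi>| \<rho>\<^sub>A \<otimes> 1 |\<psi>\<rangle> = Tr \<rho>\<^sub>A\<^sup>2\<close>.
  Psd square roots exist by the spectral theorem for Hermitian matrices and are unique by a
  trace argument.\<close>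

section \<open>Hermitian and positive semidefinite matrices\<close>

lemma index_mult_mat_vec_sum:
  "i < dim_row A \<Longrightarrow> dim_vec v = dim_col A \<Longrightarrow> (A *\<^sub>v v) $ i = (\<Sum>j<dim_col A. A $$ (i, j) * v $ j)"
  by (simp add: scalar_prod_def lessThan_atLeast0)

lemma index_mult_mat_sum:
  "i < dim_row A \<Longrightarrow> j < dim_col B \<Longrightarrow> dim_col A = dim_row B \<Longrightarrow>
   (A * B) $$ (i, j) = (\<Sum>k<dim_col A. A $$ (i, k) * B $$ (k, j))"
  by (simp add: scalar_prod_def lessThan_atLeast0)

declare index_mult_mat(1) [simp del] index_mult_mat_vec [simp del]
declare index_mult_mat_sum [simp] index_mult_mat_vec_sum [simp]

lemma adj_dim [simp]: "dim_row (adj A) = dim_col A" "dim_col (adj A) = dim_row A"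
  by (auto simp: adj_def)

lemma index_adj [simp]: "i < dim_col A \<Longrightarrow> j < dim_row A \<Longrightarrow> adj A $$ (i, j) = cnj (A $$ (j, i))"
  by (simp add: adj_def)

lemma adj_carrier [simp]: "A \<in> carrier_mat n m \<Longrightarrow> adj A \<in> carrier_mat m n"
  by auto

lemma adj_minus: "A \<in> carrier_mat n m \<Longrightarrow> B \<in> carrier_mat n m \<Longrightarrow> adj (A - B) = adj A - adj B"
  by (intro eq_matI) auto

lemma mtrace_add: "A \<in> carrier_mat n n \<Longrightarrow> B \<in> carrier_mat n n \<Longrightarrow> mtrace (A + B) = mtrace A + mtrace B"
  unfolding mtrace_def by (simp add: sum.distrib)

lemma mtrace_mult_comm:
  assumes "A \<in> carrier_mat n m" "B \<in> carrier_mat m n"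
  shows "mtrace (A * B) = mtrace (B * A)"
proof -
  have "mtrace (A * B) = (\<Sum>i<n. \<Sum>k<m. A $$ (i, k) * B $$ (k, i))"
    unfolding mtrace_def using assms by (intro sum.cong) (auto simp: index_mult_mat_sum)
  also have "\<dots> = (\<Sum>k<m. \<Sum>i<n. B $$ (k, i) * A $$ (i, k))"
    by (subst sum.swap) (simp add: mult.commute)
  also have "\<dots> = mtrace (B * A)"
    unfolding mtrace_def using assms by (intro sum.cong) (auto simp: index_mult_mat_sum)
  finally show ?thesis .
qed

text \<open>\<open>cinner u v\<close> is \<open>\<langle>u|v\<rangle>\<close>, conjugate-linear in \<open>u\<close>; it sums over the length of \<open>v\<close>,
  so the quadratic form in \<open>psd\<close> is literally \<open>cinner v (A *\<^sub>v v)\<close>.\<close>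
definition cinner :: "complex vec \<Rightarrow> complex vec \<Rightarrow> complex" where
  "cinner u v = (\<Sum>i<dim_vec v. cnj (u $ i) * v $ i)"

lemma cinner_add_right: "dim_vec w = dim_vec v \<Longrightarrow> cinner u (v + w) = cinner u v + cinner u w"
  unfolding cinner_def by (simp add: distrib_left sum.distrib)

lemma cinner_smult_right [simp]: "cinner u (c \<cdot>\<^sub>v v) = c * cinner u v"
  unfolding cinner_def by (simp add: sum_distrib_left mult_ac)

lemma cinner_smult_left: "dim_vec u = dim_vec v \<Longrightarrow> cinner (c \<cdot>\<^sub>v u) v = cnj c * cinner u v"
  unfolding cinner_def by (simp add: sum_distrib_left mult_ac)

lemma cinner_zero_right [simp]: "cinner u (0\<^sub>v n) = 0"
  unfolding cinner_def by simp

lemma cnj_cinner: "dim_vec u = dim_vec v \<Longrightarrow> cnj (cinner u v) = cinner v u"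
  unfolding cinner_def by (simp add: mult.commute)

lemma cinner_self: "cinner v v = of_real (\<Sum>i<dim_vec v. (cmod (v $ i))\<^sup>2)"
  unfolding cinner_def of_real_sum
  by (intro sum.cong refl) (simp only: complex_norm_square mult.commute)

lemma cinner_self_eq_0_iff: "v \<in> carrier_vec n \<Longrightarrow> cinner v v = 0 \<longleftrightarrow> v = 0\<^sub>v n"
proof
  assume v: "v \<in> carrier_vec n" and "cinner v v = 0"
  hence "(\<Sum>i<n. (cmod (v $ i))\<^sup>2) = 0" unfolding cinner_self using v by (simp only: of_real_eq_0_iff carrier_vecD)
  hence "\<forall>i\<in>{..<n}. (cmod (v $ i))\<^sup>2 = 0" by (subst (asm) sum_nonneg_eq_0_iff) auto
  with v show "v = 0\<^sub>v n" by (intro eq_vecI) auto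
qed (simp add: cinner_def)

definition hermitian :: "complex mat \<Rightarrow> bool" where
  "hermitian A \<longleftrightarrow> dim_row A = dim_col A \<and> adj A = A"

lemma psd_iff_cinner:
  "psd A \<longleftrightarrow> hermitian A \<and> (\<forall>v. dim_vec v = dim_row A \<longrightarrow> 0 \<le> Re (cinner v (A *\<^sub>v v)))"
  unfolding psd_def hermitian_def cinner_def by auto

lemma psd_hermitian: "psd A \<Longrightarrow> hermitian A"
  unfolding psd_iff_cinner by blast

lemma psd_cinner_nonneg: "psd A \<Longrightarrow> dim_vec v = dim_row A \<Longrightarrow> 0 \<le> Re (cinner v (A *\<^sub>v v))"
  unfolding psd_iff_cinner by blast

lemma psd_carrier: "psd A \<Longrightarrow> A \<in> carrier_mat (dim_row A) (dim_row A)"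
  unfolding psd_def carrier_mat_def by auto

lemma hermitian_index:
  "hermitian A \<Longrightarrow> i < dim_row A \<Longrightarrow> j < dim_row A \<Longrightarrow> A $$ (i, j) = cnj (A $$ (j, i))"
  unfolding hermitian_def by (metis index_adj)

lemma hermitian_cinner_swap:
  assumes h: "hermitian A" and A: "A \<in> carrier_mat n n" and u: "u \<in> carrier_vec n" and v: "v \<in> carrier_vec n"
  shows "cinner u (A *\<^sub>v v) = cinner (A *\<^sub>v u) v"
proof -
  have Aw: "(A *\<^sub>v w) $ i = (\<Sum>j<n. A $$ (i, j) * w $ j)" if "w \<in> carrier_vec n" "i < n" for w i
    using that carrier_matD[OF A] by simp
  have "cinner u (A *\<^sub>v v) = (\<Sum>i<n. \<Sum>j<n. cnj (u $ i) * A $$ (i, j) * v $ j)"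
    using A v by (simp add: cinner_def Aw sum_distrib_left mult.assoc)
  also have "\<dots> = (\<Sum>j<n. \<Sum>i<n. cnj (A $$ (j, i) * u $ i) * v $ j)"
  proof (subst sum.swap, intro sum.cong refl)
    fix i j assume "i \<in> {..<n}" "j \<in> {..<n}"
    hence "A $$ (j, i) = cnj (A $$ (i, j))" using A by (intro hermitian_index[OF h]) auto
    thus "cnj (u $ j) * A $$ (j, i) * v $ i = cnj (A $$ (i, j) * u $ j) * v $ i" by simp
  qed
  also have "\<dots> = cinner (A *\<^sub>v u) v"
    using u v by (simp add: cinner_def Aw sum_distrib_right)
  finally show ?thesis .
qed

lemma hermitian_cinner_real:
  assumes "hermitian A" "A \<in> carrier_mat n n" "v \<in> carrier_vec n"
  shows "cinner v (A *\<^sub>v v) = of_real (Re (cinner v (A *\<^sub>v v)))"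
proof -
  have "cnj (cinner v (A *\<^sub>v v)) = cinner v (A *\<^sub>v v)"
    using assms by (simp add: hermitian_cinner_swap cnj_cinner)
  thus ?thesis by (metis Reals_cnj_iff of_real_Re)
qed

section \<open>Weighted sums of rank-one projectors\<close>

definition outer_sum :: "nat \<Rightarrow> nat \<Rightarrow> (nat \<Rightarrow> complex) \<Rightarrow> (nat \<Rightarrow> complex vec) \<Rightarrow> complex mat" where
  "outer_sum n k c u = mat n n (\<lambda>(a, b). \<Sum>j<k. c j * u j $ a * cnj (u j $ b))"

definition orthonormal :: "nat \<Rightarrow> nat \<Rightarrow> (nat \<Rightarrow> complex vec) \<Rightarrow> bool" where
  "orthonormal n k u \<longleftrightarrow> (\<forall>j<k. u j \<in> carrier_vec n) \<and>
     (\<forall>j<k. \<forall>l<k. cinner (u j) (u l) = (if j = l then 1 else 0))"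

lemma outer_sum_carrier [simp]: "outer_sum n k c u \<in> carrier_mat n n"
  by (simp add: outer_sum_def)

lemma outer_sum_dim [simp]: "dim_row (outer_sum n k c u) = n" "dim_col (outer_sum n k c u) = n"
  by (simp_all add: outer_sum_def)

lemma index_outer_sum [simp]:
  "a < n \<Longrightarrow> b < n \<Longrightarrow> outer_sum n k c u $$ (a, b) = (\<Sum>j<k. c j * u j $ a * cnj (u j $ b))"
  by (simp add: outer_sum_def)

lemma outer_sum_cong:
  "(\<And>j. j < k \<Longrightarrow> c j = d j) \<Longrightarrow> outer_sum n k c u = outer_sum n k d u"
  unfolding outer_sum_def by (intro cong_mat refl) (simp add: case_prod_beta)

lemma orthonormalD:
  "orthonormal n k u \<Longrightarrow> j < k \<Longrightarrow> u j \<in> carrier_vec n"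
  "orthonormal n k u \<Longrightarrow> j < k \<Longrightarrow> l < k \<Longrightarrow> cinner (u j) (u l) = (if j = l then 1 else 0)"
  unfolding orthonormal_def by blast+

lemma orthonormal_sum:
  "orthonormal n k u \<Longrightarrow> j < k \<Longrightarrow> l < k \<Longrightarrow> (\<Sum>a<n. cnj (u j $ a) * u l $ a) = (if j = l then 1 else 0)"
  using orthonormalD(2)[of n k u j l] orthonormalD(1)[of n k u l] by (simp add: cinner_def)

lemma outer_sum_mult_vec:
  assumes "y \<in> carrier_vec n"
  shows "outer_sum n k c u *\<^sub>v y = vec n (\<lambda>a. \<Sum>j<k. c j * cinner (u j) y * u j $ a)"
proof (rule eq_vecI)
  fix a assume "a < dim_vec (vec n (\<lambda>a. \<Sum>j<k. c j * cinner (u j) y * u j $ a))"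
  hence a: "a < n" by simp
  have "(outer_sum n k c u *\<^sub>v y) $ a = (\<Sum>b<n. \<Sum>j<k. c j * u j $ a * cnj (u j $ b) * y $ b)"
    using assms a by (simp add: sum_distrib_right)
  also have "\<dots> = (\<Sum>j<k. c j * (\<Sum>b<n. cnj (u j $ b) * y $ b) * u j $ a)"
    by (subst sum.swap) (simp add: sum_distrib_left mult_ac)
  finally show "(outer_sum n k c u *\<^sub>v y) $ a = vec n (\<lambda>a. \<Sum>j<k. c j * cinner (u j) y * u j $ a) $ a"
    using assms a by (simp add: cinner_def)
qed simp

lemma cinner_outer_sum_mult_vec:
  assumes u: "orthonormal n k u" and j: "j < k" and y: "y \<in> carrier_vec n"
  shows "cinner (u j) (outer_sum n k c u *\<^sub>v y) = c j * cinner (u j) y"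
proof -
  have "cinner (u j) (outer_sum n k c u *\<^sub>v y) = (\<Sum>a<n. \<Sum>l<k. c l * cinner (u l) y * (cnj (u j $ a) * u l $ a))"
    using y by (simp add: cinner_def outer_sum_mult_vec sum_distrib_left mult_ac)
  also have "\<dots> = (\<Sum>l<k. c l * cinner (u l) y * (\<Sum>a<n. cnj (u j $ a) * u l $ a))"
    by (subst sum.swap) (simp only: sum_distrib_left)
  also have "\<dots> = (\<Sum>l<k. if l = j then c j * cinner (u j) y else 0)"
    using j by (intro sum.cong refl) (simp add: orthonormal_sum[OF u])
  finally show ?thesis using j by simp
qed

lemma mtrace_outer_sum:
  assumes u: "orthonormal n k u"
  shows "mtrace (outer_sum n k c u) = (\<Sum>j<k. c j)"
proof -
  have "mtrace (outer_sum n k c u) = (\<Sum>j<k. c j * (\<Sum>a<n. cnj (u j $ a) * u j $ a))"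
    unfolding mtrace_def by (simp add: sum_distrib_left mult_ac sum.swap[of _ "{..<n}"])
  also have "\<dots> = (\<Sum>j<k. c j)"
    using orthonormal_sum[OF u] by simp
  finally show ?thesis .
qed

lemma mult_outer_sum:
  assumes A: "A \<in> carrier_mat n n" and u: "\<And>j. j < k \<Longrightarrow> u j \<in> carrier_vec n"
    and eig: "\<And>j. j < k \<Longrightarrow> A *\<^sub>v u j = e j \<cdot>\<^sub>v u j"
  shows "A * outer_sum n k c u = outer_sum n k (\<lambda>j. e j * c j) u"
proof (rule eq_matI)
  fix a b assume "a < dim_row (outer_sum n k (\<lambda>j. e j * c j) u)" "b < dim_col (outer_sum n k (\<lambda>j. e j * c j) u)"
  hence a: "a < n" and b: "b < n" by auto
  have "(A * outer_sum n k c u) $$ (a, b) = (\<Sum>j<k. c j * (\<Sum>d<n. A $$ (a, d) * u j $ d) * cnj (u j $ b))"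
    using A a b by (simp add: sum_distrib_left sum_distrib_right mult_ac sum.swap[of _ "{..<n}"])
  also have "\<dots> = (\<Sum>j<k. c j * (A *\<^sub>v u j) $ a * cnj (u j $ b))"
    using A a u by (intro sum.cong refl) simp
  also have "\<dots> = outer_sum n k (\<lambda>j. e j * c j) u $$ (a, b)"
    using a b u[THEN carrier_vecD] by (simp add: eig mult_ac)
  finally show "(A * outer_sum n k c u) $$ (a, b) = outer_sum n k (\<lambda>j. e j * c j) u $$ (a, b)" .
qed (use A in auto)

lemma outer_sum_mult_vec_member:
  assumes u: "orthonormal n k u" and j: "j < k"
  shows "outer_sum n k c u *\<^sub>v u j = c j \<cdot>\<^sub>v u j"
proof (rule eq_vecI)
  fix a assume "a < dim_vec (c j \<cdot>\<^sub>v u j)"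
  hence a: "a < n" using orthonormalD(1)[OF u j] by simp
  have "(outer_sum n k c u *\<^sub>v u j) $ a = (\<Sum>l<k. c l * cinner (u l) (u j) * u l $ a)"
    using orthonormalD(1)[OF u j] a by (simp add: outer_sum_mult_vec)
  also have "\<dots> = (\<Sum>l<k. if l = j then c j * u j $ a else 0)"
    using orthonormalD(2)[OF u _ j] by (intro sum.cong refl) simp
  also have "\<dots> = (c j \<cdot>\<^sub>v u j) $ a" using a j orthonormalD(1)[OF u j] by simp
  finally show "(outer_sum n k c u *\<^sub>v u j) $ a = (c j \<cdot>\<^sub>v u j) $ a" .
qed (use orthonormalD(1)[OF u j] in simp)

lemma outer_sum_mult:
  assumes u: "orthonormal n k u"
  shows "outer_sum n k c u * outer_sum n k d u = outer_sum n k (\<lambda>j. c j * d j) u"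
  by (rule mult_outer_sum) (use orthonormalD(1)[OF u] outer_sum_mult_vec_member[OF u] in auto)

lemma outer_sum_one:
  assumes u: "orthonormal n n u"
  shows "outer_sum n n (\<lambda>_. 1) u = 1\<^sub>m n"
proof -
  define U where "U = mat n n (\<lambda>(a, j). u j $ a)"
  have U: "U \<in> carrier_mat n n" unfolding U_def by simp
  have "adj U * U = 1\<^sub>m n"
    using U orthonormal_sum[OF u] by (intro eq_matI) (auto simp: U_def)
  hence "U * adj U = 1\<^sub>m n" using mat_mult_left_right_inverse[OF adj_carrier[OF U] U] U by auto
  moreover have "U * adj U = outer_sum n n (\<lambda>_. 1) u"
  proof (rule eq_matI)
    fix a b assume "a < dim_row (outer_sum n n (\<lambda>_. 1) u)" "b < dim_col (outer_sum n n (\<lambda>_. 1) u)"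
    hence ab: "a < n" "b < n" by auto
    have "(U * adj U) $$ (a, b) = (\<Sum>j<n. U $$ (a, j) * adj U $$ (j, b))"
      using U ab by simp
    also have "\<dots> = outer_sum n n (\<lambda>_. 1) u $$ (a, b)"
      using U ab by (auto simp: U_def intro!: sum.cong)
    finally show "(U * adj U) $$ (a, b) = outer_sum n n (\<lambda>_. 1) u $$ (a, b)" .
  qed (use U in auto)
  ultimately show ?thesis by metis
qed

lemma psd_outer_sum:
  assumes w: "\<And>j. j < k \<Longrightarrow> 0 \<le> w j" and u: "\<And>j. j < k \<Longrightarrow> u j \<in> carrier_vec n"
  shows "psd (outer_sum n k (\<lambda>j. of_real (w j)) u)" (is "psd ?M")
  unfolding psd_iff_cinner
proof (intro conjI allI impI)
  show "hermitian ?M"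
    unfolding hermitian_def by (intro conjI eq_matI) (simp_all add: mult_ac)
next
  fix v :: "complex vec" assume "dim_vec v = dim_row ?M"
  hence v: "v \<in> carrier_vec n" by (intro carrier_vecI) simp
  have "cinner v (?M *\<^sub>v v) = (\<Sum>a<n. \<Sum>j<k. of_real (w j) * cinner (u j) v * (cnj (v $ a) * u j $ a))"
    using v by (simp add: cinner_def[of v] outer_sum_mult_vec sum_distrib_left mult_ac)
  also have "\<dots> = (\<Sum>j<k. of_real (w j) * cinner (u j) v * (\<Sum>a<n. cnj (v $ a) * u j $ a))"
    by (subst sum.swap) (simp only: sum_distrib_left)
  also have "\<dots> = (\<Sum>j<k. of_real (w j * (cmod (cinner (u j) v))\<^sup>2))"
  proof (intro sum.cong refl)
    fix j assume "j \<in> {..<k}"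
    hence "(\<Sum>a<n. cnj (v $ a) * u j $ a) = cnj (cinner (u j) v)"
      using u v by (simp add: cinner_def mult.commute)
    thus "of_real (w j) * cinner (u j) v * (\<Sum>a<n. cnj (v $ a) * u j $ a) = of_real (w j * (cmod (cinner (u j) v))\<^sup>2)"
      by (simp only: of_real_mult complex_norm_square mult.assoc)
  qed
  finally show "0 \<le> Re (cinner v (?M *\<^sub>v v))"
    using w by (auto intro!: sum_nonneg)
qed

section \<open>Spectral theorem and positive square roots\<close>

lemma mtrace_similar:
  assumes "similar_mat_wit A B P Q" "A \<in> carrier_mat n n"
  shows "mtrace A = mtrace B"
proof -
  from assms have c: "B \<in> carrier_mat n n" "P \<in> carrier_mat n n" "Q \<in> carrier_mat n n"
    and QP: "Q * P = 1\<^sub>m n" and AB: "A = P * B * Q"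
    unfolding similar_mat_wit_def Let_def by auto
  have "mtrace A = mtrace ((P * B) * Q)" using AB by simp
  also have "\<dots> = mtrace (Q * (P * B))" using c by (intro mtrace_mult_comm) auto
  also have "Q * (P * B) = B" using c QP by (simp flip: assoc_mult_mat[of _ n n])
  finally show ?thesis .
qed

lemma mtrace_eq_sum_list_diag_mat: "B \<in> carrier_mat n n \<Longrightarrow> mtrace B = sum_list (diag_mat B)"
  unfolding mtrace_def diag_mat_def
  by (simp add: sum_set_upt_conv_sum_list_nat[symmetric] atLeast0LessThan)

text \<open>The diagonal of a Schur form lists the eigenvalues, whose sum is the trace.\<close>
lemma exists_eigenvalue_ne:
  assumes A: "A \<in> carrier_mat n n" and tr: "mtrace A \<noteq> of_nat n * t"
  shows "\<exists>e. eigenvalue A e \<and> e \<noteq> t"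
proof -
  obtain es where cp: "char_poly A = (\<Prod>a\<leftarrow>es. [:- a, 1:])" and len: "length es = n"
    using char_poly_factorized[OF A] by blast
  obtain B P Q where sd: "schur_decomposition A es = (B, P, Q)" by (cases "schur_decomposition A es") auto
  from schur_decomposition[OF A cp sd] have sim: "similar_mat_wit A B P Q" and dg: "diag_mat B = es" by auto
  have "B \<in> carrier_mat n n" using sim A unfolding similar_mat_wit_def Let_def by auto
  hence trA: "mtrace A = sum_list es" using mtrace_similar[OF sim A] mtrace_eq_sum_list_diag_mat dg by simp
  obtain e where e: "e \<in> set es" "e \<noteq> t"
  proof (rule ccontr)
    assume "\<not> thesis"
    hence "map (\<lambda>_. t) es = es" using that by (intro map_idI) auto
    hence "sum_list es = of_nat n * t" using len by (metis sum_list_triv)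
    with tr trA show False by simp
  qed
  have "poly (char_poly A) e = 0" unfolding cp poly_prod_list prod_list_zero_iff
    using e(1) by (auto simp: image_iff intro!: bexI[of _ "[:- e, 1:]"])
  thus ?thesis using eigenvalue_root_char_poly[OF A] e(2) by blast
qed

lemma hermitian_eigenvalue_real:
  assumes h: "hermitian A" and A: "A \<in> carrier_mat n n" and x: "x \<in> carrier_vec n" "x \<noteq> 0\<^sub>v n"
    and e: "A *\<^sub>v x = e \<cdot>\<^sub>v x"
  shows "e = of_real (Re e)"
proof -
  have "e * cinner x x = cinner x (A *\<^sub>v x)" using e by simp
  also have "\<dots> = cinner (A *\<^sub>v x) x" using hermitian_cinner_swap[OF h A x(1) x(1)] .
  also have "\<dots> = cnj e * cinner x x" using e x(1) by (simp add: cinner_smult_left)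
  finally have "cnj e = e" using x cinner_self_eq_0_iff[OF x(1)] by simp
  thus ?thesis by (metis Reals_cnj_iff of_real_Re)
qed

lemma exists_unit_multiple:
  assumes x: "x \<in> carrier_vec n" "x \<noteq> 0\<^sub>v n"
  shows "\<exists>c. cinner (c \<cdot>\<^sub>v x) (c \<cdot>\<^sub>v x) = 1"
proof -
  define r where "r = (\<Sum>i<dim_vec x. (cmod (x $ i))\<^sup>2)"
  have xx: "cinner x x = of_real r" unfolding r_def by (rule cinner_self)
  have "r \<noteq> 0" using xx cinner_self_eq_0_iff[OF x(1)] x(2) by auto
  moreover have "r \<ge> 0" unfolding r_def by (simp add: sum_nonneg)
  ultimately have r: "r > 0" by simp
  define s where "s = 1 / sqrt r"
  have "cinner (of_real s \<cdot>\<^sub>v x) (of_real s \<cdot>\<^sub>v x) = of_real (s * s * r)"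
    by (simp add: cinner_smult_left xx)
  also have "s * s * r = 1" unfolding s_def using r by (simp add: field_simps)
  finally show ?thesis by auto
qed

lemma outer_sum_mult_vec_orthogonal:
  assumes "y \<in> carrier_vec n" "\<And>j. j < k \<Longrightarrow> cinner (u j) y = 0"
  shows "outer_sum n k c u *\<^sub>v y = 0\<^sub>v n"
  using assms by (intro eq_vecI) (simp_all add: outer_sum_mult_vec)

lemma orthonormal_extend:
  assumes u: "orthonormal n k u" and x: "x \<in> carrier_vec n" "cinner x x = 1"
    and orth: "\<And>j. j < k \<Longrightarrow> cinner (u j) x = 0"
  shows "orthonormal n (Suc k) (u(k := x))"
proof -
  have "cinner x (u j) = 0" if "j < k" for j
    using cnj_cinner[of x "u j"] orth[OF that] x(1) orthonormalD(1)[OF u that] by simp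
  thus ?thesis using u x orth unfolding orthonormal_def by (auto simp: less_Suc_eq)
qed

lemma hermitian_cinner_eigenvector:
  assumes h: "hermitian A" and A: "A \<in> carrier_mat n n" and u: "u \<in> carrier_vec n" and y: "y \<in> carrier_vec n"
    and eig: "A *\<^sub>v u = of_real l \<cdot>\<^sub>v u"
  shows "cinner u (A *\<^sub>v y) = of_real l * cinner u y"
  using hermitian_cinner_swap[OF h A u y] eig u y by (simp add: cinner_smult_left)

lemma shifted_eigenvector_orthogonal:
  assumes h: "hermitian A" and A: "A \<in> carrier_mat n n" and u: "orthonormal n k u"
    and eig: "\<And>j. j < k \<Longrightarrow> A *\<^sub>v u j = of_real (lam j) \<cdot>\<^sub>v u j"
    and x: "x \<in> carrier_vec n" and et: "e \<noteq> t"
    and ex: "(A + outer_sum n k (\<lambda>j. t - of_real (lam j)) u) *\<^sub>v x = e \<cdot>\<^sub>v x"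
  shows "\<forall>j<k. cinner (u j) x = 0" and "A *\<^sub>v x = e \<cdot>\<^sub>v x"
proof -
  define M where "M = outer_sum n k (\<lambda>j. t - of_real (lam j)) u"
  have M: "M \<in> carrier_mat n n" unfolding M_def by simp
  have AMx: "(A + M) *\<^sub>v x = A *\<^sub>v x + M *\<^sub>v x" using A M x by (rule add_mult_distrib_mat_vec)
  have orth: "cinner (u j) x = 0" if j: "j < k" for j
  proof -
    note uj = orthonormalD(1)[OF u j]
    have "e * cinner (u j) x = cinner (u j) ((A + M) *\<^sub>v x)" using ex by (simp add: M_def)
    also have "\<dots> = cinner (u j) (A *\<^sub>v x) + cinner (u j) (M *\<^sub>v x)"
      unfolding AMx by (rule cinner_add_right) (use A M in simp)
    also have "\<dots> = t * cinner (u j) x"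
      using hermitian_cinner_eigenvector[OF h A uj x eig[OF j]] cinner_outer_sum_mult_vec[OF u j x]
      by (simp add: M_def algebra_simps)
    finally show ?thesis using et by simp
  qed
  thus "\<forall>j<k. cinner (u j) x = 0" by blast
  have "M *\<^sub>v x = 0\<^sub>v n" unfolding M_def using x orth by (rule outer_sum_mult_vec_orthogonal)
  thus "A *\<^sub>v x = e \<cdot>\<^sub>v x" using ex AMx A x by (simp add: M_def)
qed

text \<open>Shifting the known eigenvalues \<open>lam j\<close> to a common value \<open>t\<close> chosen off the trace
  forces an eigenvector of the shifted matrix orthogonal to all \<open>u j\<close>.\<close>
lemma hermitian_extend_orthonormal_eigenvectors:
  assumes h: "hermitian A" and A: "A \<in> carrier_mat n n" and k: "k < n" and u: "orthonormal n k u"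
    and eig: "\<And>j. j < k \<Longrightarrow> A *\<^sub>v u j = of_real (lam j) \<cdot>\<^sub>v u j"
  shows "\<exists>x mu. x \<in> carrier_vec n \<and> A *\<^sub>v x = of_real mu \<cdot>\<^sub>v x \<and> cinner x x = 1 \<and>
    (\<forall>j<k. cinner (u j) x = 0)"
proof -
  define c where "c = mtrace A - (\<Sum>j<k. of_real (lam j))"
  define t where "t = c / of_nat (n - k) + 1"
  define M where "M = outer_sum n k (\<lambda>j. t - of_real (lam j)) u"
  have M: "M \<in> carrier_mat n n" unfolding M_def by simp
  have "mtrace (A + M) = mtrace A + mtrace M" by (rule mtrace_add[OF A M])
  also have "mtrace M = (\<Sum>j<k. t - of_real (lam j))" unfolding M_def by (rule mtrace_outer_sum[OF u])
  also have "mtrace A + \<dots> = c + of_nat k * t" unfolding c_def by (simp add: sum_subtractf)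
  also have "\<dots> \<noteq> of_nat n * t"
  proof
    assume "c + of_nat k * t = of_nat n * t"
    hence "of_nat (n - k) * t = c" using k by (simp add: of_nat_diff algebra_simps)
    moreover have "of_nat (n - k) * t = c + of_nat (n - k)" unfolding t_def using k by (simp add: field_simps)
    ultimately show False using k by simp
  qed
  finally obtain e where "eigenvalue (A + M) e" "e \<noteq> t"
    using exists_eigenvalue_ne[of "A + M" n] A M by auto
  then obtain x where x: "x \<in> carrier_vec n" "x \<noteq> 0\<^sub>v n" "(A + M) *\<^sub>v x = e \<cdot>\<^sub>v x" and et: "e \<noteq> t"
    unfolding eigenvalue_def eigenvector_def using A M by auto
  note shifted = shifted_eigenvector_orthogonal[OF h A u eig x(1) et x(3)[unfolded M_def]]
  obtain c where c: "cinner (c \<cdot>\<^sub>v x) (c \<cdot>\<^sub>v x) = 1" using exists_unit_multiple[OF x(1,2)] by blast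
  have "A *\<^sub>v (c \<cdot>\<^sub>v x) = of_real (Re e) \<cdot>\<^sub>v (c \<cdot>\<^sub>v x)"
    using hermitian_eigenvalue_real[OF h A x(1,2) shifted(2)] A x(1)
    by (simp add: mult_mat_vec shifted(2) smult_smult_assoc mult.commute)
  thus ?thesis using c x(1) shifted(1) by (intro exI[of _ "c \<cdot>\<^sub>v x"] exI[of _ "Re e"]) simp
qed

lemma hermitian_orthonormal_eigenvectors:
  assumes h: "hermitian A" and A: "A \<in> carrier_mat n n"
  shows "k \<le> n \<Longrightarrow> \<exists>u lam. orthonormal n k u \<and> (\<forall>j<k. A *\<^sub>v u j = of_real (lam j) \<cdot>\<^sub>v u j)"
proof (induction k)
  case 0
  show ?case by (auto simp: orthonormal_def)
next
  case (Suc k)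
  then obtain u lam where u: "orthonormal n k u" and eig: "\<forall>j<k. A *\<^sub>v u j = of_real (lam j) \<cdot>\<^sub>v u j"
    by auto
  obtain x mu where x: "x \<in> carrier_vec n" "A *\<^sub>v x = of_real mu \<cdot>\<^sub>v x" "cinner x x = 1"
    and orth: "\<forall>j<k. cinner (u j) x = 0"
    using hermitian_extend_orthonormal_eigenvectors[OF h A _ u, of lam] Suc.prems eig by auto
  have "orthonormal n (Suc k) (u(k := x))" using orthonormal_extend[OF u x(1,3)] orth by blast
  moreover have "\<forall>j<Suc k. A *\<^sub>v (u(k := x)) j = of_real ((lam(k := mu)) j) \<cdot>\<^sub>v (u(k := x)) j"
    using eig x(2) by (auto simp: less_Suc_eq)
  ultimately show ?case by blast
qed

lemma psd_sqrt_exists: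
  assumes p: "psd A" and A: "A \<in> carrier_mat n n"
  shows "\<exists>B. psd B \<and> B \<in> carrier_mat n n \<and> B * B = A"
proof -
  obtain u lam where u: "orthonormal n n u" and eig: "\<And>j. j < n \<Longrightarrow> A *\<^sub>v u j = of_real (lam j) \<cdot>\<^sub>v u j"
    using hermitian_orthonormal_eigenvectors[OF psd_hermitian[OF p] A order.refl] by blast
  note uc = orthonormalD(1)[OF u]
  have lam: "0 \<le> lam j" if j: "j < n" for j
  proof -
    have "cinner (u j) (A *\<^sub>v u j) = of_real (lam j)"
      using eig[OF j] orthonormalD(2)[OF u j j] by simp
    thus ?thesis using psd_cinner_nonneg[OF p, of "u j"] uc[OF j] A by simp
  qed
  have "A = A * outer_sum n n (\<lambda>_. 1) u" using A by (simp add: outer_sum_one[OF u])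
  also have "\<dots> = outer_sum n n (\<lambda>j. of_real (lam j)) u"
    using mult_outer_sum[OF A uc eig] by simp
  finally have A_eq: "A = outer_sum n n (\<lambda>j. of_real (lam j)) u" .
  define B where "B = outer_sum n n (\<lambda>j. of_real (sqrt (lam j))) u"
  have "B * B = A"
    unfolding B_def outer_sum_mult[OF u] A_eq using lam
    by (intro outer_sum_cong) (simp flip: of_real_mult)
  moreover have "psd B" unfolding B_def using lam uc by (intro psd_outer_sum) auto
  ultimately show ?thesis unfolding B_def by auto
qed

lemma psd_mult_vec_eq_0:
  assumes p: "psd A" and v: "dim_vec v = dim_row A" and z: "Re (cinner v (A *\<^sub>v v)) = 0"
  shows "A *\<^sub>v v = 0\<^sub>v (dim_row A)"
proof -
  let ?n = "dim_row A"
  have A: "A \<in> carrier_mat ?n ?n" using psd_carrier[OF p] .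
  have vc: "v \<in> carrier_vec ?n" using v by (rule carrier_vecI)
  obtain B where B: "psd B" "B \<in> carrier_mat ?n ?n" "B * B = A" using psd_sqrt_exists[OF p A] by blast
  have Av: "A *\<^sub>v v = B *\<^sub>v (B *\<^sub>v v)" using B vc by (auto simp flip: assoc_mult_mat_vec)
  have "cinner (B *\<^sub>v v) (B *\<^sub>v v) = cinner v (A *\<^sub>v v)"
    unfolding Av using hermitian_cinner_swap[OF psd_hermitian[OF B(1)] B(2) vc] B(2) vc by simp
  also have "\<dots> = 0"
    using hermitian_cinner_real[OF psd_hermitian[OF p] A vc] z by simp
  finally have "B *\<^sub>v v = 0\<^sub>v ?n" using cinner_self_eq_0_iff[OF mult_mat_vec_carrier[OF B(2) vc]] by simp
  thus ?thesis unfolding Av using B(2) by (intro eq_vecI) auto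
qed

lemma mtrace_adj_mult_mult:
  assumes A: "A \<in> carrier_mat n n" and D: "D \<in> carrier_mat n m"
  shows "mtrace (adj D * A * D) = (\<Sum>j<m. cinner (col D j) (A *\<^sub>v col D j))"
  unfolding mtrace_def
proof (intro sum.cong)
  fix j assume j: "j \<in> {..<m}"
  have "(adj D * A * D) $$ (j, j) = (\<Sum>k<n. (\<Sum>i<n. cnj (D $$ (i, j)) * A $$ (i, k)) * D $$ (k, j))"
    using A D j by (auto intro!: sum.cong)
  also have "\<dots> = (\<Sum>i<n. cnj (D $$ (i, j)) * (\<Sum>k<n. A $$ (i, k) * D $$ (k, j)))"
    by (simp add: sum_distrib_left sum_distrib_right mult.assoc) (rule sum.swap)
  also have "\<dots> = cinner (col D j) (A *\<^sub>v col D j)"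
    unfolding cinner_def using A D j by (intro sum.cong refl) auto
  finally show "(adj D * A * D) $$ (j, j) = cinner (col D j) (A *\<^sub>v col D j)" .
qed (use D in auto)

lemma psd_mtrace_adj_mult_mult_nonneg:
  assumes "psd A" "A \<in> carrier_mat n n" "D \<in> carrier_mat n m"
  shows "0 \<le> Re (mtrace (adj D * A * D))"
  unfolding mtrace_adj_mult_mult[OF assms(2,3)] Re_sum
  using assms by (intro sum_nonneg psd_cinner_nonneg) auto

lemma psd_mtrace_adj_mult_mult_eq_0:
  assumes p: "psd A" and A: "A \<in> carrier_mat n n" and D: "D \<in> carrier_mat n m"
    and z: "Re (mtrace (adj D * A * D)) = 0"
  shows "A * D = 0\<^sub>m n m"
proof (rule eq_matI)
  have "(\<Sum>j<m. Re (cinner (col D j) (A *\<^sub>v col D j))) = 0"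
    using z unfolding mtrace_adj_mult_mult[OF A D] Re_sum .
  hence "\<forall>j\<in>{..<m}. Re (cinner (col D j) (A *\<^sub>v col D j)) = 0"
    using p A D by (subst (asm) sum_nonneg_eq_0_iff) (auto intro: psd_cinner_nonneg)
  hence null: "A *\<^sub>v col D j = 0\<^sub>v n" if "j < m" for j
    using psd_mult_vec_eq_0[OF p, of "col D j"] that A D by auto
  fix i j assume "i < dim_row (0\<^sub>m n m)" "j < dim_col (0\<^sub>m n m)"
  thus "(A * D) $$ (i, j) = 0\<^sub>m n m $$ (i, j)"
    using arg_cong[OF null, of j "\<lambda>w. w $ i"] A D by (simp add: cinner_def)
qed (use A D in auto)

lemma psd_one_mat: "psd (1\<^sub>m n)"
  unfolding psd_iff_cinner hermitian_def
proof (intro conjI allI impI)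
  fix v :: "complex vec" assume "dim_vec v = dim_row (1\<^sub>m n :: complex mat)"
  hence "1\<^sub>m n *\<^sub>v v = v" by (intro one_mult_mat_vec carrier_vecI) simp
  thus "0 \<le> Re (cinner v (1\<^sub>m n *\<^sub>v v))" by (simp add: cinner_self sum_nonneg)
qed (auto intro!: eq_matI)

lemma hermitian_mult_self_eq_0:
  assumes h: "hermitian D" and D: "D \<in> carrier_mat n n" and DD: "D * D = 0\<^sub>m n n"
  shows "D = 0\<^sub>m n n"
proof -
  have "Re (mtrace (adj D * 1\<^sub>m n * D)) = 0" using h D DD by (simp add: hermitian_def mtrace_def)
  thus ?thesis using psd_mtrace_adj_mult_mult_eq_0[OF psd_one_mat one_carrier_mat D] D by simp
qed

text \<open>For \<open>D = B - C\<close> one has \<open>B D + D C = B\<^sup>2 - C\<^sup>2 = 0\<close>; the trace of \<open>D (B D + D C)\<close>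
  splits into two nonnegative parts, so \<open>B D = C D = 0\<close> and hence \<open>D\<^sup>2 = 0\<close>.\<close>
lemma psd_sqrt_unique:
  assumes B: "psd B" "B \<in> carrier_mat n n" and C: "psd C" "C \<in> carrier_mat n n"
    and eq: "B * B = C * C"
  shows "B = C"
proof -
  define D where "D = B - C"
  have Dc: "D \<in> carrier_mat n n" unfolding D_def using B C by auto
  have hD: "hermitian D"
    unfolding D_def hermitian_def using B C psd_hermitian by (simp add: adj_minus hermitian_def)
  hence aD: "adj D = D" by (simp add: hermitian_def)
  have "B * D + D * C = (B * B - B * C) + (B * C - C * C)" unfolding D_def
    using B C by (simp add: mult_minus_distrib_mat[of _ n n] minus_mult_distrib_mat[of _ n n])
  also have "\<dots> = 0\<^sub>m n n" using B C eq by (intro eq_matI) auto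
  finally have BDC: "B * D + D * C = 0\<^sub>m n n" .
  have "mtrace (D * B * D) + mtrace (D * C * D) = mtrace (D * (B * D)) + mtrace (D * D * C)"
    using mtrace_mult_comm[of "D * C" n n D] Dc C B by (simp add: assoc_mult_mat[of _ n n])
  also have "\<dots> = mtrace (D * (B * D) + D * (D * C))"
    using B C Dc by (simp add: mtrace_add[of _ n] assoc_mult_mat[of _ n n])
  also have "\<dots> = mtrace (D * (B * D + D * C))"
    using B C Dc by (intro arg_cong[where f = mtrace] mult_add_distrib_mat[symmetric]) auto
  also have "\<dots> = 0" unfolding BDC using Dc by (simp add: mtrace_def)
  finally have "Re (mtrace (adj D * B * D)) + Re (mtrace (adj D * C * D)) = 0"
    unfolding aD by (metis plus_complex.sel(1) zero_complex.sel(1))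
  moreover note psd_mtrace_adj_mult_mult_nonneg[OF B Dc] psd_mtrace_adj_mult_mult_nonneg[OF C Dc]
  ultimately have "B * D = 0\<^sub>m n n" "C * D = 0\<^sub>m n n"
    using psd_mtrace_adj_mult_mult_eq_0[OF B Dc] psd_mtrace_adj_mult_mult_eq_0[OF C Dc] by linarith+
  moreover have "D * D = B * D - C * D"
    unfolding D_def by (rule minus_mult_distrib_mat) (use B C in auto)
  ultimately have "D * D = 0\<^sub>m n n" by (intro eq_matI) auto
  hence D0: "D = 0\<^sub>m n n" by (rule hermitian_mult_self_eq_0[OF hD Dc])
  show ?thesis
  proof (rule eq_matI)
    fix i j assume "i < dim_row C" "j < dim_col C"
    thus "B $$ (i, j) = C $$ (i, j)" using arg_cong[OF D0, of "\<lambda>M. M $$ (i, j)"] B C by (simp add: D_def)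
  qed (use B C in auto)
qed

lemma msqrt_eqI:
  assumes "psd B" "dim_row B = dim_row A" "B * B = A"
  shows "msqrt A = B"
  unfolding msqrt_def
proof (rule the_equality)
  fix C assume C: "psd C \<and> dim_row C = dim_row A \<and> C * C = A"
  show "C = B"
    using psd_sqrt_unique[of C "dim_row A" B] C assms psd_carrier by metis
qed (use assms in blast)

lemma
  assumes "psd A"
  shows psd_msqrt: "psd (msqrt A)"
    and msqrt_carrier: "msqrt A \<in> carrier_mat (dim_row A) (dim_row A)"
    and msqrt_mult_self: "msqrt A * msqrt A = A"
proof -
  obtain B where B: "psd B" "B \<in> carrier_mat (dim_row A) (dim_row A)" "B * B = A"
    using psd_sqrt_exists[OF assms psd_carrier[OF assms]] by blast
  hence "msqrt A = B" by (intro msqrt_eqI) auto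
  with B show "psd (msqrt A)" "msqrt A \<in> carrier_mat (dim_row A) (dim_row A)" "msqrt A * msqrt A = A"
    by auto
qed

section \<open>Kronecker products\<close>

lemma sum_lessThan_mult:
  "(\<Sum>s<a * b. g s) = (\<Sum>i<a. \<Sum>j<b. g (i * b + j :: nat))"
proof (induction a)
  case (Suc a)
  have "(\<Sum>s<Suc a * b. g s) = (\<Sum>s<a * b. g s) + (\<Sum>s\<in>{a * b..<a * b + b}. g s)"
    by (simp add: sum.atLeastLessThan_concat[symmetric] lessThan_atLeast0 add.commute)
  also have "(\<Sum>s\<in>{a * b..<a * b + b}. g s) = (\<Sum>j<b. g (a * b + j))"
    by (rule sum.reindex_bij_witness[where i = "\<lambda>j. a * b + j" and j = "\<lambda>s. s - a * b"]) auto
  finally show ?case using Suc by simp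
qed simp

lemma mult_index_less:
  assumes "i < a" "j < (b :: nat)"
  shows "i * b + j < a * b"
proof -
  have "i * b + j < Suc i * b" using assms(2) by simp
  also have "\<dots> \<le> a * b" using assms(1) by (intro mult_le_mono1) simp
  finally show ?thesis .
qed

lemma eq_vec_mult_indexI:
  assumes "v \<in> carrier_vec (a * b)" "w \<in> carrier_vec (a * b)"
    and "\<And>i j. i < a \<Longrightarrow> j < b \<Longrightarrow> v $ (i * b + j) = w $ (i * b + j)"
  shows "v = w"
proof (rule eq_vecI)
  fix r assume "r < dim_vec w"
  hence r: "r < a * b" using assms(2) by simp
  hence "r div b < a" "r mod b < b" by (auto simp: less_mult_imp_div_less) (cases "b = 0"; simp)
  thus "v $ r = w $ r" using assms(3) by (metis div_mult_mod_eq)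
qed (use assms in simp)

lemma eq_mat_mult_indexI:
  assumes "A \<in> carrier_mat (a * b) (a * b)" "B \<in> carrier_mat (a * b) (a * b)"
    and "\<And>i j i' j'. i < a \<Longrightarrow> j < b \<Longrightarrow> i' < a \<Longrightarrow> j' < b \<Longrightarrow>
      A $$ (i * b + j, i' * b + j') = B $$ (i * b + j, i' * b + j')"
  shows "A = B"
proof (rule eq_matI)
  fix r c assume "r < dim_row B" "c < dim_col B"
  hence "r < a * b" "c < a * b" using assms(2) by auto
  hence "r div b < a" "r mod b < b" "c div b < a" "c mod b < b"
    by (auto simp: less_mult_imp_div_less) (cases "b = 0"; simp)+
  thus "A $$ (r, c) = B $$ (r, c)" using assms(3) by (metis div_mult_mod_eq)
qed (use assms in auto)

lemma tensor_dim [simp]: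
  "dim_row (tensor X Y) = dim_row X * dim_row Y" "dim_col (tensor X Y) = dim_col X * dim_col Y"
  unfolding tensor_def by auto

lemma tensor_carrier:
  "X \<in> carrier_mat a a \<Longrightarrow> Y \<in> carrier_mat b b \<Longrightarrow> tensor X Y \<in> carrier_mat (a * b) (a * b)"
  unfolding carrier_mat_def by auto

lemma index_tensor:
  assumes "X \<in> carrier_mat a a" "Y \<in> carrier_mat b b" "i < a" "j < b" "i' < a" "j' < b"
  shows "tensor X Y $$ (i * b + j, i' * b + j') = X $$ (i, i') * Y $$ (j, j')"
  using assms mult_index_less[of i a j b] mult_index_less[of i' a j' b] unfolding tensor_def by auto

lemma tensor_mult:
  assumes X: "X \<in> carrier_mat a a" and Z: "Z \<in> carrier_mat a a"
    and Y: "Y \<in> carrier_mat b b" and W: "W \<in> carrier_mat b b"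
  shows "tensor X Y * tensor Z W = tensor (X * Z) (Y * W)"
proof (rule eq_mat_mult_indexI)
  fix i j i' j' assume ij: "i < a" "j < b" "i' < a" "j' < b"
  have "(tensor X Y * tensor Z W) $$ (i * b + j, i' * b + j')
      = (\<Sum>k<a. \<Sum>l<b. tensor X Y $$ (i * b + j, k * b + l) * tensor Z W $$ (k * b + l, i' * b + j'))"
    using X Y Z W ij mult_index_less by (simp add: sum_lessThan_mult)
  also have "\<dots> = (\<Sum>k<a. \<Sum>l<b. (X $$ (i, k) * Z $$ (k, i')) * (Y $$ (j, l) * W $$ (l, j')))"
  proof (intro sum.cong refl)
    fix k l assume "k \<in> {..<a}" "l \<in> {..<b}"
    hence "tensor X Y $$ (i * b + j, k * b + l) = X $$ (i, k) * Y $$ (j, l)"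
      "tensor Z W $$ (k * b + l, i' * b + j') = Z $$ (k, i') * W $$ (l, j')"
      using ij by (auto intro: index_tensor X Y Z W)
    thus "tensor X Y $$ (i * b + j, k * b + l) * tensor Z W $$ (k * b + l, i' * b + j')
      = (X $$ (i, k) * Z $$ (k, i')) * (Y $$ (j, l) * W $$ (l, j'))" by (simp only: ac_simps)
  qed
  also have "\<dots> = (\<Sum>k<a. X $$ (i, k) * Z $$ (k, i')) * (\<Sum>l<b. Y $$ (j, l) * W $$ (l, j'))"
    by (simp only: sum_product)
  also have "\<dots> = tensor (X * Z) (Y * W) $$ (i * b + j, i' * b + j')"
    using X Y Z W ij by (simp add: index_tensor[of _ a _ b])
  finally show "(tensor X Y * tensor Z W) $$ (i * b + j, i' * b + j') = tensor (X * Z) (Y * W) $$ (i * b + j, i' * b + j')" .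
qed (use X Y Z W tensor_carrier in auto)

lemma adj_tensor:
  assumes X: "X \<in> carrier_mat a a" and Y: "Y \<in> carrier_mat b b"
  shows "adj (tensor X Y) = tensor (adj X) (adj Y)"
proof (rule eq_mat_mult_indexI)
  fix i j i' j' assume "i < a" "j < b" "i' < a" "j' < b"
  thus "adj (tensor X Y) $$ (i * b + j, i' * b + j') = tensor (adj X) (adj Y) $$ (i * b + j, i' * b + j')"
    using X Y mult_index_less by (simp add: index_tensor index_tensor[OF adj_carrier[OF X] adj_carrier[OF Y]])
qed (use X Y tensor_carrier in auto)

lemma psd_mult_adj:
  assumes T: "T \<in> carrier_mat n m"
  shows "psd (T * adj T)"
proof -
  have "T * adj T = outer_sum n m (\<lambda>_. of_real 1) (col T)"
    using T by (intro eq_matI) (auto intro!: sum.cong)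
  also have "psd \<dots>" using T by (intro psd_outer_sum) auto
  finally show ?thesis .
qed

lemma psd_tensor:
  assumes X: "psd X" "X \<in> carrier_mat a a" and Y: "psd Y" "Y \<in> carrier_mat b b"
  shows "psd (tensor X Y)"
proof -
  let ?K = "msqrt X" and ?L = "msqrt Y"
  have K: "?K \<in> carrier_mat a a" "adj ?K = ?K" "?K * ?K = X"
    using psd_msqrt[OF X(1)] msqrt_carrier[OF X(1)] msqrt_mult_self[OF X(1)] X(2)
    by (auto simp: hermitian_def dest: psd_hermitian)
  have L: "?L \<in> carrier_mat b b" "adj ?L = ?L" "?L * ?L = Y"
    using psd_msqrt[OF Y(1)] msqrt_carrier[OF Y(1)] msqrt_mult_self[OF Y(1)] Y(2)
    by (auto simp: hermitian_def dest: psd_hermitian)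
  have "tensor X Y = tensor ?K ?L * adj (tensor ?K ?L)"
    using K L by (simp add: tensor_mult adj_tensor)
  thus ?thesis using psd_mult_adj[OF tensor_carrier[OF K(1) L(1)]] by simp
qed

lemma msqrt_tensor:
  assumes X: "psd X" "X \<in> carrier_mat a a" and Y: "psd Y" "Y \<in> carrier_mat b b"
  shows "msqrt (tensor X Y) = tensor (msqrt X) (msqrt Y)"
proof (rule msqrt_eqI)
  have K: "msqrt X \<in> carrier_mat a a" using msqrt_carrier[OF X(1)] X(2) by simp
  have L: "msqrt Y \<in> carrier_mat b b" using msqrt_carrier[OF Y(1)] Y(2) by simp
  show "psd (tensor (msqrt X) (msqrt Y))" using psd_tensor[OF psd_msqrt[OF X(1)] K psd_msqrt[OF Y(1)] L] .
  show "dim_row (tensor (msqrt X) (msqrt Y)) = dim_row (tensor X Y)" using K L X Y by simp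
  show "tensor (msqrt X) (msqrt Y) * tensor (msqrt X) (msqrt Y) = tensor X Y"
    using K L by (simp add: tensor_mult msqrt_mult_self X(1) Y(1))
qed

lemma index_tensor_mult_vec:
  assumes X: "X \<in> carrier_mat a a" and Y: "Y \<in> carrier_mat b b" and v: "v \<in> carrier_vec (a * b)"
    and ij: "i < a" "j < b"
  shows "(tensor X Y *\<^sub>v v) $ (i * b + j) = (\<Sum>i'<a. \<Sum>j'<b. X $$ (i, i') * Y $$ (j, j') * v $ (i' * b + j'))"
  using assms mult_index_less[OF ij] by (simp add: sum_lessThan_mult index_tensor mult_index_less)

lemma index_tensor_one_right_mult_vec:
  assumes "X \<in> carrier_mat a a" "v \<in> carrier_vec (a * b)" "i < a" "j < b"
  shows "(tensor X (1\<^sub>m b) *\<^sub>v v) $ (i * b + j) = (\<Sum>i'<a. X $$ (i, i') * v $ (i' * b + j))"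
  unfolding index_tensor_mult_vec[OF assms(1) one_carrier_mat assms(2-4)]
  using assms(4) by (simp add: sum.delta if_distrib if_distribR cong: if_cong)

lemma index_tensor_one_left_mult_vec:
  assumes "Y \<in> carrier_mat b b" "v \<in> carrier_vec (a * b)" "i < a" "j < b"
  shows "(tensor (1\<^sub>m a) Y *\<^sub>v v) $ (i * b + j) = (\<Sum>j'<b. Y $$ (j, j') * v $ (i * b + j'))"
  unfolding index_tensor_mult_vec[OF one_carrier_mat assms]
  using assms(3) by (subst sum.swap) (simp add: sum.delta if_distrib if_distribR cong: if_cong)

section \<open>Pure bipartite states\<close>

lemma index_proj [simp]: "i < dim_vec v \<Longrightarrow> j < dim_vec v \<Longrightarrow> proj v $$ (i, j) = v $ i * cnj (v $ j)"
  unfolding proj_def by simp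

lemma psd_proj: "psd (proj v)"
proof -
  have "proj v = outer_sum (dim_vec v) 1 (\<lambda>_. of_real 1) (\<lambda>_. v)"
    by (intro eq_matI) (auto simp: proj_def)
  also have "psd \<dots>" by (intro psd_outer_sum) auto
  finally show ?thesis .
qed

lemma proj_mult_self:
  assumes "cinner v v = 1"
  shows "proj v * proj v = proj v"
proof (rule eq_matI)
  fix a b assume "a < dim_row (proj v)" "b < dim_col (proj v)"
  hence ab: "a < dim_vec v" "b < dim_vec v" by (auto simp: proj_def)
  have "(proj v * proj v) $$ (a, b) = v $ a * cnj (v $ b) * cinner v v"
    using ab by (simp add: proj_def cinner_def sum_distrib_left mult_ac)
  thus "(proj v * proj v) $$ (a, b) = proj v $$ (a, b)" using ab assms by simp
qed (simp_all add: proj_def)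

lemma msqrt_proj: "cinner v v = 1 \<Longrightarrow> msqrt (proj v) = proj v"
  by (intro msqrt_eqI psd_proj proj_mult_self) simp_all

lemma mtrace_proj_mult:
  assumes S: "S \<in> carrier_mat (dim_vec v) (dim_vec v)"
  shows "mtrace (proj v * S) = cinner v (S *\<^sub>v v)"
proof -
  let ?n = "dim_vec v"
  have "mtrace (proj v * S) = (\<Sum>r<?n. \<Sum>c<?n. v $ r * cnj (v $ c) * S $$ (c, r))"
    unfolding mtrace_def using S by (intro sum.cong) (auto simp: proj_def)
  also have "\<dots> = (\<Sum>c<?n. cnj (v $ c) * (\<Sum>r<?n. S $$ (c, r) * v $ r))"
    by (subst sum.swap) (simp add: sum_distrib_left mult_ac)
  also have "\<dots> = cinner v (S *\<^sub>v v)"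
    unfolding cinner_def using S by (intro sum.cong) auto
  finally show ?thesis .
qed

lemma ptrace_B_carrier: "ptrace_B a b R \<in> carrier_mat a a"
  by (simp add: ptrace_B_def)

lemma ptrace_A_carrier: "ptrace_A a b R \<in> carrier_mat b b"
  by (simp add: ptrace_A_def)

lemma ptrace_B_proj:
  assumes "dim_vec \<psi> = a * b"
  shows "ptrace_B a b (proj \<psi>) = outer_sum a b (\<lambda>_. of_real 1) (\<lambda>j. vec a (\<lambda>i. \<psi> $ (i * b + j)))"
  unfolding ptrace_B_def using assms by (intro eq_matI) (auto intro!: sum.cong simp: mult_index_less)

lemma ptrace_A_proj:
  assumes "dim_vec \<psi> = a * b"
  shows "ptrace_A a b (proj \<psi>) = outer_sum b a (\<lambda>_. of_real 1) (\<lambda>i. vec b (\<lambda>j. \<psi> $ (i * b + j)))"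
  unfolding ptrace_A_def using assms by (intro eq_matI) (auto intro!: sum.cong simp: mult_index_less)

lemma psd_ptrace_B_proj: "dim_vec \<psi> = a * b \<Longrightarrow> psd (ptrace_B a b (proj \<psi>))"
  unfolding ptrace_B_proj by (rule psd_outer_sum) auto

lemma psd_ptrace_A_proj: "dim_vec \<psi> = a * b \<Longrightarrow> psd (ptrace_A a b (proj \<psi>))"
  unfolding ptrace_A_proj by (rule psd_outer_sum) auto

lemma tensor_ptrace_proj_mult_vec:
  assumes \<psi>: "dim_vec \<psi> = a * b"
  shows "tensor (ptrace_B a b (proj \<psi>)) (1\<^sub>m b) *\<^sub>v \<psi> = tensor (1\<^sub>m a) (ptrace_A a b (proj \<psi>)) *\<^sub>v \<psi>"
proof (rule eq_vec_mult_indexI)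
  have \<psi>c: "\<psi> \<in> carrier_vec (a * b)" using \<psi> by (rule carrier_vecI)
  fix i j assume ij: "i < a" "j < b"
  let ?f = "\<lambda>i j. \<psi> $ (i * b + j)"
  have "(tensor (ptrace_B a b (proj \<psi>)) (1\<^sub>m b) *\<^sub>v \<psi>) $ (i * b + j)
      = (\<Sum>i'<a. ptrace_B a b (proj \<psi>) $$ (i, i') * ?f i' j)"
    by (rule index_tensor_one_right_mult_vec[OF ptrace_B_carrier \<psi>c ij])
  also have "\<dots> = (\<Sum>i'<a. \<Sum>j'<b. ?f i j' * cnj (?f i' j') * ?f i' j)"
    using ij \<psi> by (simp add: ptrace_B_proj sum_distrib_right)
  also have "\<dots> = (\<Sum>j'<b. \<Sum>i'<a. ?f i' j * cnj (?f i' j') * ?f i j')"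
    by (subst sum.swap) (simp only: ac_simps)
  also have "\<dots> = (\<Sum>j'<b. ptrace_A a b (proj \<psi>) $$ (j, j') * ?f i j')"
    using ij \<psi> by (simp add: ptrace_A_proj sum_distrib_right)
  also have "\<dots> = (tensor (1\<^sub>m a) (ptrace_A a b (proj \<psi>)) *\<^sub>v \<psi>) $ (i * b + j)"
    by (rule index_tensor_one_left_mult_vec[OF ptrace_A_carrier \<psi>c ij, symmetric])
  finally show "(tensor (ptrace_B a b (proj \<psi>)) (1\<^sub>m b) *\<^sub>v \<psi>) $ (i * b + j)
      = (tensor (1\<^sub>m a) (ptrace_A a b (proj \<psi>)) *\<^sub>v \<psi>) $ (i * b + j)" .
qed (auto simp: ptrace_B_def ptrace_A_def intro!: carrier_vecI)

lemma cinner_tensor_ptrace_B_proj_mult_vec: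
  assumes \<psi>: "dim_vec \<psi> = a * b"
  defines "\<rho> \<equiv> ptrace_B a b (proj \<psi>)"
  shows "cinner \<psi> (tensor \<rho> (1\<^sub>m b) *\<^sub>v \<psi>) = mtrace (\<rho> * \<rho>)"
proof -
  have \<psi>c: "\<psi> \<in> carrier_vec (a * b)" using \<psi> by (rule carrier_vecI)
  have \<rho>: "\<rho> \<in> carrier_mat a a" unfolding \<rho>_def by (rule ptrace_B_carrier)
  let ?f = "\<lambda>i j. \<psi> $ (i * b + j)"
  have "cinner \<psi> (tensor \<rho> (1\<^sub>m b) *\<^sub>v \<psi>)
      = (\<Sum>i<a. \<Sum>j<b. cnj (?f i j) * (tensor \<rho> (1\<^sub>m b) *\<^sub>v \<psi>) $ (i * b + j))"
    unfolding cinner_def using \<rho> by (simp add: sum_lessThan_mult)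
  also have "\<dots> = (\<Sum>i<a. \<Sum>j<b. \<Sum>i'<a. \<rho> $$ (i, i') * (?f i' j * cnj (?f i j)))"
  proof (intro sum.cong refl)
    fix i j assume "i \<in> {..<a}" "j \<in> {..<b}"
    hence "(tensor \<rho> (1\<^sub>m b) *\<^sub>v \<psi>) $ (i * b + j) = (\<Sum>i'<a. \<rho> $$ (i, i') * ?f i' j)"
      by (intro index_tensor_one_right_mult_vec[OF \<rho> \<psi>c]) auto
    thus "cnj (?f i j) * (tensor \<rho> (1\<^sub>m b) *\<^sub>v \<psi>) $ (i * b + j)
      = (\<Sum>i'<a. \<rho> $$ (i, i') * (?f i' j * cnj (?f i j)))"
      by (simp add: sum_distrib_left mult.commute mult.left_commute)
  qed
  also have "\<dots> = (\<Sum>i<a. \<Sum>i'<a. \<rho> $$ (i, i') * (\<Sum>j<b. ?f i' j * cnj (?f i j)))"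
    by (rule sum.cong[OF refl], subst sum.swap) (simp add: sum_distrib_left)
  also have "\<dots> = (\<Sum>i<a. \<Sum>i'<a. \<rho> $$ (i, i') * \<rho> $$ (i', i))"
    using \<psi> by (intro sum.cong refl) (simp add: \<rho>_def ptrace_B_def mult_index_less)
  also have "\<dots> = mtrace (\<rho> * \<rho>)"
    unfolding mtrace_def using \<rho> by (intro sum.cong) auto
  finally show ?thesis .
qed

lemma vec_eq_of_minus_eq_0:
  fixes v w :: "complex vec"
  assumes "v \<in> carrier_vec n" "w \<in> carrier_vec n" "v - w = 0\<^sub>v n"
  shows "v = w"
proof (rule eq_vecI)
  fix i assume "i < dim_vec w"
  moreover have "dim_vec v = n" "dim_vec w = n" using assms(1,2) by auto
  ultimately have "(v - w) $ i = 0" using assms(3) by simp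
  thus "v $ i = w $ i" using \<open>i < dim_vec w\<close> \<open>dim_vec v = n\<close> \<open>dim_vec w = n\<close> by simp
qed (use assms in simp)

text \<open>With \<open>d = F v - E v\<close> one gets \<open>(E + F) d = 0\<close>; as both quadratic forms at \<open>d\<close> are
  nonnegative they vanish, so \<open>E d = 0\<close>.\<close>
lemma psd_commuting_mult_vec:
  assumes E: "psd E" "E \<in> carrier_mat n n" and F: "psd F" "F \<in> carrier_mat n n"
    and comm: "E * F = F * E" and v: "v \<in> carrier_vec n"
    and sq: "(E * E) *\<^sub>v v = (F * F) *\<^sub>v v"
  shows "(E * F) *\<^sub>v v = (E * E) *\<^sub>v v"
proof -
  define d where "d = F *\<^sub>v v - E *\<^sub>v v"
  have d: "d \<in> carrier_vec n" unfolding d_def using E F v by simp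
  have Ed: "E *\<^sub>v d = (E * F) *\<^sub>v v - (E * E) *\<^sub>v v"
    unfolding d_def using E F v by (simp add: mult_minus_distrib_mat_vec assoc_mult_mat_vec)
  have Fd: "F *\<^sub>v d = (F * F) *\<^sub>v v - (F * E) *\<^sub>v v"
    unfolding d_def using E F v by (simp add: mult_minus_distrib_mat_vec assoc_mult_mat_vec)
  have "E *\<^sub>v d + F *\<^sub>v d = 0\<^sub>v n"
    unfolding Ed Fd comm[symmetric] sq using E F v by (intro eq_vecI) auto
  hence "cinner d (E *\<^sub>v d) + cinner d (F *\<^sub>v d) = 0"
    using cinner_add_right[of "F *\<^sub>v d" "E *\<^sub>v d" d] E F by simp
  hence "Re (cinner d (E *\<^sub>v d)) + Re (cinner d (F *\<^sub>v d)) = 0"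
    by (metis plus_complex.sel(1) zero_complex.sel(1))
  moreover have "0 \<le> Re (cinner d (E *\<^sub>v d))" "0 \<le> Re (cinner d (F *\<^sub>v d))"
    using psd_cinner_nonneg E F d by auto
  ultimately have "E *\<^sub>v d = 0\<^sub>v n" using psd_mult_vec_eq_0[OF E(1), of d] E d by auto
  hence "(E * F) *\<^sub>v v - (E * E) *\<^sub>v v = 0\<^sub>v n" unfolding Ed .
  thus ?thesis by (rule vec_eq_of_minus_eq_0[rotated 2]) (use E F v in auto)
qed

lemma mtrace_proj_mult_tensor_msqrt_ptrace:
  assumes \<psi>: "dim_vec \<psi> = a * b"
  defines "\<rho>A \<equiv> ptrace_B a b (proj \<psi>)" and "\<rho>B \<equiv> ptrace_A a b (proj \<psi>)"
  shows "mtrace (proj \<psi> * tensor (msqrt \<rho>A) (msqrt \<rho>B)) = mtrace (\<rho>A * \<rho>A)"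
proof -
  have pA: "psd \<rho>A" "\<rho>A \<in> carrier_mat a a" unfolding \<rho>A_def using \<psi> psd_ptrace_B_proj ptrace_B_carrier by auto
  have pB: "psd \<rho>B" "\<rho>B \<in> carrier_mat b b" unfolding \<rho>B_def using \<psi> psd_ptrace_A_proj ptrace_A_carrier by auto
  let ?RA = "msqrt \<rho>A" and ?RB = "msqrt \<rho>B"
  have RA: "psd ?RA" "?RA \<in> carrier_mat a a" "?RA * ?RA = \<rho>A"
    using psd_msqrt msqrt_carrier msqrt_mult_self pA by auto
  have RB: "psd ?RB" "?RB \<in> carrier_mat b b" "?RB * ?RB = \<rho>B"
    using psd_msqrt msqrt_carrier msqrt_mult_self pB by auto
  let ?E = "tensor ?RA (1\<^sub>m b)" and ?F = "tensor (1\<^sub>m a) ?RB"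
  have E: "psd ?E" "?E \<in> carrier_mat (a * b) (a * b)"
    using psd_tensor[OF RA(1,2) psd_one_mat one_carrier_mat] tensor_carrier RA(2) by auto
  have F: "psd ?F" "?F \<in> carrier_mat (a * b) (a * b)"
    using psd_tensor[OF psd_one_mat one_carrier_mat RB(1,2)] tensor_carrier RB(2) by auto
  have EF: "?E * ?F = tensor ?RA ?RB" "?F * ?E = tensor ?RA ?RB"
    using tensor_mult[OF RA(2) one_carrier_mat one_carrier_mat RB(2)]
      tensor_mult[OF one_carrier_mat RA(2) RB(2) one_carrier_mat] RA(2) RB(2) by simp_all
  have EE: "?E * ?E = tensor \<rho>A (1\<^sub>m b)"
    using tensor_mult[OF RA(2) RA(2) one_carrier_mat one_carrier_mat] RA(3) by simp
  have FF: "?F * ?F = tensor (1\<^sub>m a) \<rho>B"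
    using tensor_mult[OF one_carrier_mat one_carrier_mat RB(2) RB(2)] RB(3) by simp
  have "(?E * ?E) *\<^sub>v \<psi> = (?F * ?F) *\<^sub>v \<psi>"
    unfolding EE FF by (simp only: \<rho>A_def \<rho>B_def tensor_ptrace_proj_mult_vec[OF \<psi>])
  from psd_commuting_mult_vec[OF E F _ carrier_vecI[OF \<psi>] this]
  have "tensor ?RA ?RB *\<^sub>v \<psi> = tensor \<rho>A (1\<^sub>m b) *\<^sub>v \<psi>" unfolding EF EE by simp
  hence "mtrace (proj \<psi> * tensor ?RA ?RB) = cinner \<psi> (tensor \<rho>A (1\<^sub>m b) *\<^sub>v \<psi>)"
    using mtrace_proj_mult[of "tensor ?RA ?RB" \<psi>] tensor_carrier[OF RA(2) RB(2)] \<psi> by simp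
  also have "\<dots> = mtrace (\<rho>A * \<rho>A)"
    unfolding \<rho>A_def by (rule cinner_tensor_ptrace_B_proj_mult_vec[OF \<psi>])
  finally show ?thesis .
qed

theorem mainTheorem3:
  fixes dA dB :: nat and \<psi> :: "complex vec"
  assumes "dA \<ge> 1" and "dB \<ge> 1"
    and "dim_vec \<psi> = dA * dB"
    and "(\<Sum>k<dA * dB. cmod (\<psi> $ k) ^ 2) = 1"
  shows "D2 (proj \<psi>) (tensor (ptrace_B dA dB (proj \<psi>)) (ptrace_A dA dB (proj \<psi>)))
         = concurrence dA dB (proj \<psi>)"
proof -
  note \<psi> = assms(3)
  have unit: "cinner \<psi> \<psi> = 1" using assms(3,4) by (simp add: cinner_self)
  have "msqrt (tensor (ptrace_B dA dB (proj \<psi>)) (ptrace_A dA dB (proj \<psi>)))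
      = tensor (msqrt (ptrace_B dA dB (proj \<psi>))) (msqrt (ptrace_A dA dB (proj \<psi>)))"
    by (rule msqrt_tensor[OF psd_ptrace_B_proj[OF \<psi>] ptrace_B_carrier psd_ptrace_A_proj[OF \<psi>] ptrace_A_carrier])
  thus ?thesis
    unfolding D2_def concurrence_def msqrt_proj[OF unit]
    by (simp add: mtrace_proj_mult_tensor_msqrt_ptrace[OF \<psi>])
qed

end
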